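(* Let $l>0$, $x,y>0$, $\rho\in(-1,1)$, and let $$g=\mathbb{E}_{(Z_1,Z_2)\sim\mathrm{BVN}(\rho)}\Big[1\wedge e^{-lx^{1/2}Z_1-l^2/2}\wedge e^{-ly^{1/2}Z_2-l^2/2}\Big].$$ Then $$g=\mathrm{BVN}_{\mathrm{up}}\Big(\frac{l}{2x^{1/2}},\frac{l}{2y^{1/2}};\rho\Big)+k(x,y,\rho)+k(y,x,\rho),$$ where $k(x,y,\rho)=e^{l^2(x-1)/2}\,\mathrm{BVN}_{\mathrm{low}}\Big(\frac{a}{\sqrt{1+b^2}},U;-\frac{b}{\sqrt{1+b^2}}\Big)$ with $b=-\{(x/y)^{1/2}-\rho\}/\sqrt{1-\rho^2}$, $a=blx^{1/2}$, $U=l/(2x^{1/2})-lx^{1/2}$ (and $k(y,x,\rho)$ is given by the same formula with the roles of $x$ and $y$ exchanged).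
   Context: $\mathrm{BVN}(\rho)$ denotes the bivariate normal distribution with zero means, unit variances and correlation $\rho$; for $(Z_1,Z_2)\sim\mathrm{BVN}(\rho)$, $\mathrm{BVN}_{\mathrm{low}}(p,q;\rho)=\mathbb{P}(Z_1\le p,Z_2\le q)$ and $\mathrm{BVN}_{\mathrm{up}}(p,q;\rho)=\mathbb{P}(Z_1\ge p,Z_2\ge q)$. *)

theory Defs
  imports "HOL-Probability.Probability"
begin

definition bvn_density :: "real \<Rightarrow> real \<times> real \<Rightarrow> real" where
  "bvn_density \<rho> z =
     exp (- ((fst z)\<^sup>2 - 2 * \<rho> * fst z * snd z + (snd z)\<^sup>2) / (2 * (1 - \<rho>\<^sup>2)))
     / (2 * pi * sqrt (1 - \<rho>\<^sup>2))"

definition BVN :: "real \<Rightarrow> (real \<times> real) measure" where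
  "BVN \<rho> = density lborel (\<lambda>z. ennreal (bvn_density \<rho> z))"

definition BVN_low :: "real \<Rightarrow> real \<Rightarrow> real \<Rightarrow> real" where
  "BVN_low p q \<rho> = measure (BVN \<rho>) {z. fst z \<le> p \<and> snd z \<le> q}"

definition BVN_up :: "real \<Rightarrow> real \<Rightarrow> real \<Rightarrow> real" where
  "BVN_up p q \<rho> = measure (BVN \<rho>) {z. fst z \<ge> p \<and> snd z \<ge> q}"

definition kfun :: "real \<Rightarrow> real \<Rightarrow> real \<Rightarrow> real \<Rightarrow> real" where
  "kfun l x y \<rho> =
     (let b = - (sqrt (x / y) - \<rho>) / sqrt (1 - \<rho>\<^sup>2);
          a = b * l * sqrt x;
          U = l / (2 * sqrt x) - l * sqrt x
      in exp (l\<^sup>2 * (x - 1) / 2) *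
         BVN_low (a / sqrt (1 + b\<^sup>2)) U (- b / sqrt (1 + b\<^sup>2)))"

end

theory Submission
  imports Defs
begin

(*
  Put A = exp (-l sqrt x Z1 - l^2/2) and B = exp (-l sqrt y Z2 - l^2/2).  Off the null line A = B,
  min 1 (min A B) is 1 on {A >= 1, B >= 1} = {Z1 <= -l/(2 sqrt x), Z2 <= -l/(2 sqrt y)}, whose
  probability is BVN_up by the symmetry z -> -z; it is A on {A < 1, A <= B}; and it is B on the
  rest, which is the A-case with the coordinates exchanged.  Given Z1 = s, Z2 is N(rho s, 1 - rho^2),
  so the A-part is the integral over s > -l/(2 sqrt x) of phi(s) A(s) Phi(-b s).  Multiplying by A
  only shifts the Gaussian, phi(s) A(s) = exp (l^2 (x - 1)/2) phi(s + l sqrt x), and after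
  t = -(s + l sqrt x) what remains is E[Phi(a + b Z); Z <= U] = P(Z' - b Z <= a, Z <= U) for an
  independent Z'.  Normalising Z' - b Z by sqrt (1 + b^2) gives the lower orthant probability
  in k(x,y,rho).
*)

definition std_normal_cdf :: "real \<Rightarrow> ennreal" where
  "std_normal_cdf u = (\<integral>\<^sup>+t. ennreal (std_normal_density t) * indicator {..u} t \<partial>lborel)"

lemma borel_measurable_std_normal_cdf[measurable]: "std_normal_cdf \<in> borel_measurable borel"
  unfolding std_normal_cdf_def[abs_def] indicator_def atMost_iff by measurable

lemma pred_in_atMost_measurable[measurable (raw)]:
  fixes f g :: "'a \<Rightarrow> real"
  assumes [measurable]: "f \<in> borel_measurable M" "g \<in> borel_measurable M"
  shows "Measurable.pred M (\<lambda>z. f z \<in> {..g z})"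
  unfolding atMost_iff by measurable

lemma normal_density_shift_scale:
  assumes "\<sigma> > 0"
  shows "normal_density m \<sigma> (m + t * \<sigma>) = std_normal_density t / \<sigma>"
  using assms by (simp add: normal_density_def real_sqrt_mult power_mult_distrib)

lemma nn_integral_normal_density:
  assumes "\<sigma> > 0"
  shows "(\<integral>\<^sup>+t. ennreal (normal_density m \<sigma> t) \<partial>lborel) = 1"
  using assms by (subst nn_integral_eq_integral) auto

lemma nn_integral_normal_density_atMost:
  assumes "\<sigma> > 0"
  shows "(\<integral>\<^sup>+t. ennreal (normal_density m \<sigma> t) * indicator {..u} t \<partial>lborel)
    = std_normal_cdf ((u - m) / \<sigma>)"
proof -
  have "(\<integral>\<^sup>+t. ennreal (normal_density m \<sigma> t) * indicator {..u} t \<partial>lborel)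
      = ennreal \<sigma> * (\<integral>\<^sup>+t. ennreal (std_normal_density t / \<sigma>) * indicator {..(u - m) / \<sigma>} t \<partial>lborel)"
    using assms by (subst nn_integral_real_affine[where c=\<sigma> and t=m])
      (auto intro!: arg_cong2[where f="(*)"] nn_integral_cong
            simp: normal_density_shift_scale indicator_def pos_le_divide_eq algebra_simps)
  also have "\<dots> = std_normal_cdf ((u - m) / \<sigma>)"
    unfolding std_normal_cdf_def using assms
    by (subst nn_integral_cmult[symmetric])
      (auto intro!: nn_integral_cong simp: indicator_def ennreal_mult[symmetric])
  finally show ?thesis .
qed

lemma std_normal_density_tilt:
  "std_normal_density s * exp (- c * s - c\<^sup>2 / 2) = std_normal_density (s + c)"
proof -
  have "- s\<^sup>2 / 2 + (- c * s - c\<^sup>2 / 2) = - (s + c)\<^sup>2 / 2"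
    by (simp add: power2_eq_square field_simps)
  then show ?thesis
    unfolding std_normal_density_def by (simp add: mult.assoc exp_add[symmetric])
qed

lemma std_normal_density_mult_exp_shift:
  assumes "x \<ge> 0"
  shows "std_normal_density s * exp (- l * sqrt x * s - l\<^sup>2 / 2)
    = exp (l\<^sup>2 * (x - 1) / 2) * std_normal_density (s + l * sqrt x)"
proof -
  have "exp (- l * sqrt x * s - l\<^sup>2 / 2)
      = exp (- (l * sqrt x) * s - (l * sqrt x)\<^sup>2 / 2) * exp (l\<^sup>2 * (x - 1) / 2)"
    unfolding exp_add[symmetric] using assms by (simp add: power_mult_distrib field_simps)
  then show ?thesis
    using std_normal_density_tilt[of s "l * sqrt x"] by (simp add: mult_ac)
qed

lemma borel_measurable_bvn_density[measurable]:
  "bvn_density r \<in> borel_measurable (lborel \<Otimes>\<^sub>M lborel)"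
  unfolding bvn_density_def by measurable

lemma BVN_eq_density_pair: "BVN r = density (lborel \<Otimes>\<^sub>M lborel) (\<lambda>z. ennreal (bvn_density r z))"
  by (simp add: BVN_def lborel_prod)

lemma sets_BVN[measurable_cong]: "sets (BVN r) = sets (lborel \<Otimes>\<^sub>M lborel)"
  by (simp add: BVN_eq_density_pair)

lemma space_BVN[simp]: "space (BVN r) = UNIV"
  by (simp add: BVN_def)

lemma bvn_density_swap: "bvn_density r (t, s) = bvn_density r (s, t)"
  by (simp add: bvn_density_def algebra_simps)

lemma bvn_density_uminus: "bvn_density r (- z) = bvn_density r z"
  by (simp add: bvn_density_def)

lemma bvn_density_factor:
  assumes "\<bar>r\<bar> < 1"
  shows "bvn_density r (s, t) = std_normal_density s * normal_density (r * s) (sqrt (1 - r\<^sup>2)) t"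
proof -
  have r: "0 < 1 - r\<^sup>2"
    using assms by (simp add: abs_square_less_1)
  have "exp (- (s\<^sup>2 - 2 * r * s * t + t\<^sup>2) / (2 * (1 - r\<^sup>2)))
      = exp (- s\<^sup>2 / 2) * exp (- (t - r * s)\<^sup>2 / (2 * (1 - r\<^sup>2)))"
    unfolding exp_add[symmetric] using r by (simp add: field_simps power2_eq_square)
  moreover have "sqrt (2 * pi * (1 - r\<^sup>2)) = sqrt (2 * pi) * sqrt (1 - r\<^sup>2)"
    by (simp add: real_sqrt_mult)
  moreover have "sqrt (2 * pi) * sqrt (2 * pi) = 2 * pi"
    by simp
  ultimately show ?thesis
    using r by (simp add: bvn_density_def normal_density_def std_normal_density_def del: real_sqrt_mult)
qed

lemma nn_integral_BVN_conditional:
  fixes g :: "real \<times> real \<Rightarrow> ennreal"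
  assumes "\<bar>r\<bar> < 1" and [measurable]: "g \<in> borel_measurable (lborel \<Otimes>\<^sub>M lborel)"
  shows "(\<integral>\<^sup>+z. g z \<partial>BVN r) = (\<integral>\<^sup>+s. ennreal (std_normal_density s) *
           (\<integral>\<^sup>+t. ennreal (normal_density (r * s) (sqrt (1 - r\<^sup>2)) t) * g (s, t) \<partial>lborel) \<partial>lborel)"
    (is "_ = ?rhs")
proof -
  have "(\<integral>\<^sup>+z. g z \<partial>BVN r) = (\<integral>\<^sup>+s. \<integral>\<^sup>+t. bvn_density r (s, t) * g (s, t) \<partial>lborel \<partial>lborel)"
    unfolding BVN_eq_density_pair
    by (simp add: nn_integral_density) (rule lborel.nn_integral_fst[symmetric], measurable)
  also have "\<dots> = ?rhs"
    using assms(1) by (simp add: bvn_density_factor ennreal_mult nn_integral_cmult mult.assoc)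
  finally show ?thesis .
qed

lemma nn_integral_BVN_swap:
  fixes g :: "real \<times> real \<Rightarrow> ennreal"
  assumes [measurable]: "g \<in> borel_measurable (lborel \<Otimes>\<^sub>M lborel)"
  shows "(\<integral>\<^sup>+z. g z \<partial>BVN r) = (\<integral>\<^sup>+z. g (snd z, fst z) \<partial>BVN r)"
proof -
  have "(\<integral>\<^sup>+z. g z \<partial>BVN r) = (\<integral>\<^sup>+t. \<integral>\<^sup>+s. bvn_density r (s, t) * g (s, t) \<partial>lborel \<partial>lborel)"
    unfolding BVN_eq_density_pair
    by (simp add: nn_integral_density) (rule lborel_pair.nn_integral_snd[symmetric], measurable)
  also have "\<dots> = (\<integral>\<^sup>+t. \<integral>\<^sup>+s. bvn_density r (t, s) * g (s, t) \<partial>lborel \<partial>lborel)"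
    by (simp add: bvn_density_swap)
  also have "\<dots> = (\<integral>\<^sup>+z. g (snd z, fst z) \<partial>BVN r)"
    using lborel.nn_integral_fst[of "\<lambda>z. bvn_density r z * g (snd z, fst z)" lborel]
    by (simp add: BVN_eq_density_pair nn_integral_density)
  finally show ?thesis .
qed

lemma nn_integral_BVN_uminus:
  fixes g :: "real \<times> real \<Rightarrow> ennreal"
  assumes "g \<in> borel_measurable (lborel \<Otimes>\<^sub>M lborel)"
  shows "(\<integral>\<^sup>+z. g z \<partial>BVN r) = (\<integral>\<^sup>+z. g (- z) \<partial>BVN r)"
proof -
  have [measurable]: "g \<in> borel_measurable borel" "bvn_density r \<in> borel_measurable borel"
    using assms borel_measurable_bvn_density[of r] by (simp_all add: lborel_prod)
  have "(\<integral>\<^sup>+z. g z \<partial>BVN r) = (\<integral>\<^sup>+z. bvn_density r z * g z \<partial>lborel)"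
    by (simp add: BVN_def nn_integral_density)
  also have "\<dots> = (\<integral>\<^sup>+z. bvn_density r (- z) * g (- z) \<partial>lborel)"
    by (subst lborel_affine[of "-1" 0]) (simp_all add: nn_integral_density nn_integral_distr)
  also have "\<dots> = (\<integral>\<^sup>+z. g (- z) \<partial>BVN r)"
    by (simp add: BVN_def nn_integral_density bvn_density_uminus)
  finally show ?thesis .
qed

lemma prob_space_BVN:
  assumes "\<bar>r\<bar> < 1"
  shows "prob_space (BVN r)"
proof (rule prob_spaceI)
  have "0 < sqrt (1 - r\<^sup>2)"
    using assms by (simp add: abs_square_less_1)
  then have "(\<integral>\<^sup>+z. 1 \<partial>BVN r) = 1"
    using nn_integral_BVN_conditional[OF assms, of "\<lambda>_. 1"] by (simp add: nn_integral_normal_density)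
  then show "emeasure (BVN r) (space (BVN r)) = 1"
    by simp
qed

lemma ennreal_BVN_low:
  assumes "\<bar>r\<bar> < 1"
  shows "ennreal (BVN_low p q r) = (\<integral>\<^sup>+z. of_bool (fst z \<le> p \<and> snd z \<le> q) \<partial>BVN r)"
proof -
  interpret prob_space "BVN r"
    using assms by (rule prob_space_BVN)
  have "{z \<in> space (BVN r). fst z \<le> p \<and> snd z \<le> q} \<in> sets (BVN r)"
    by measurable
  then have "emeasure (BVN r) {z. fst z \<le> p \<and> snd z \<le> q}
      = (\<integral>\<^sup>+z. indicator {z. fst z \<le> p \<and> snd z \<le> q} z \<partial>BVN r)"
    by simp
  then show ?thesis
    by (simp add: BVN_low_def emeasure_eq_measure indicator_def of_bool_def)
qed

lemma BVN_low_eq_nn_integral: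
  assumes "\<bar>r\<bar> < 1"
  shows "ennreal (BVN_low p q r) = (\<integral>\<^sup>+t. ennreal (std_normal_density t) * indicator {..q} t
           * std_normal_cdf ((p - r * t) / sqrt (1 - r\<^sup>2)) \<partial>lborel)"
    (is "_ = ?rhs")
proof -
  have \<sigma>: "0 < sqrt (1 - r\<^sup>2)"
    using assms by (simp add: abs_square_less_1)
  have "ennreal (BVN_low p q r) = (\<integral>\<^sup>+z. of_bool (snd z \<le> p \<and> fst z \<le> q) \<partial>BVN r)"
    using assms
    by (simp add: ennreal_BVN_low nn_integral_BVN_swap[of "\<lambda>z. of_bool (fst z \<le> p \<and> snd z \<le> q)"])
  also have "\<dots> = (\<integral>\<^sup>+t. ennreal (std_normal_density t) * (indicator {..q} t *
           (\<integral>\<^sup>+s. ennreal (normal_density (r * t) (sqrt (1 - r\<^sup>2)) s) * indicator {..p} s \<partial>lborel)) \<partial>lborel)"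
    using assms
    by (subst nn_integral_BVN_conditional) (auto intro!: nn_integral_cong simp: indicator_def)
  also have "\<dots> = ?rhs"
    using \<sigma> by (simp add: nn_integral_cmult nn_integral_normal_density_atMost mult.assoc)
  finally show ?thesis .
qed

lemma BVN_up_eq_BVN_low: "BVN_up p q r = BVN_low (- p) (- q) r"
proof -
  have sets: "{z. P z} \<in> sets (BVN r)" if "Measurable.pred (lborel \<Otimes>\<^sub>M lborel) P" for P
    using that by (simp add: BVN_eq_density_pair pred_def space_pair_measure)
  have "emeasure (BVN r) {z. p \<le> fst z \<and> q \<le> snd z}
      = (\<integral>\<^sup>+z. indicator {z. p \<le> fst z \<and> q \<le> snd z} z \<partial>BVN r)"
    using sets[of "\<lambda>z. p \<le> fst z \<and> q \<le> snd z"] by simp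
  also have "\<dots> = (\<integral>\<^sup>+z. indicator {z. fst z \<le> - p \<and> snd z \<le> - q} (- z) \<partial>BVN r)"
    by (simp add: indicator_def)
  also have "\<dots> = (\<integral>\<^sup>+z. indicator {z. fst z \<le> - p \<and> snd z \<le> - q} z \<partial>BVN r)"
    by (rule nn_integral_BVN_uminus[symmetric]) measurable
  also have "\<dots> = emeasure (BVN r) {z. fst z \<le> - p \<and> snd z \<le> - q}"
    using sets[of "\<lambda>z. fst z \<le> - p \<and> snd z \<le> - q"] by simp
  finally show ?thesis
    by (simp add: BVN_up_def BVN_low_def measure_def)
qed

lemma AE_BVN_not_graph:
  assumes "\<bar>r\<bar> < 1" and [measurable]: "u \<in> borel_measurable borel"
  shows "AE z in BVN r. snd z \<noteq> u (fst z)"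
proof -
  have null: "(\<integral>\<^sup>+t. ennreal (normal_density m \<sigma> t) * of_bool (t = c) \<partial>lborel) = 0" for m \<sigma> c
    by (auto intro!: nn_integral_0_iff_AE[THEN iffD2] eventually_mono[OF AE_lborel_singleton[of c]])
  have "(\<integral>\<^sup>+z. indicator {z. snd z = u (fst z)} z \<partial>BVN r) = 0"
    using assms(1) by (subst nn_integral_BVN_conditional) (simp_all add: indicator_def null)
  moreover have "{z \<in> space (BVN r). snd z \<noteq> u (fst z)} \<in> sets (BVN r)"
    by measurable
  ultimately show ?thesis
    by (simp add: AE_iff_nn_integral)
qed

lemma nn_integral_std_normal_cdf_affine:
  "(\<integral>\<^sup>+t. ennreal (std_normal_density t) * indicator {..U} t * std_normal_cdf (a + b * t) \<partial>lborel)
    = ennreal (BVN_low (a / sqrt (1 + b\<^sup>2)) U (- b / sqrt (1 + b\<^sup>2)))"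
proof -
  define c where "c = - b / sqrt (1 + b\<^sup>2)"
  have pos: "0 < sqrt (1 + b\<^sup>2)"
    by (simp add: add_pos_nonneg)
  have c2: "1 - c\<^sup>2 = 1 / (1 + b\<^sup>2)"
    unfolding c_def using pos by (simp add: power_divide field_simps add_nonneg_nonneg)
  moreover have "0 < 1 / (1 + b\<^sup>2)"
    by (simp add: add_pos_nonneg)
  ultimately have "c\<^sup>2 < 1"
    by linarith
  then have c: "\<bar>c\<bar> < 1" "sqrt (1 - c\<^sup>2) = 1 / sqrt (1 + b\<^sup>2)"
    using c2 by (simp_all add: abs_square_less_1 real_sqrt_divide)
  have "(a / sqrt (1 + b\<^sup>2) - c * t) / sqrt (1 - c\<^sup>2) = a + b * t" for t
    unfolding c(2) c_def using pos by (simp add: field_simps real_sqrt_divide)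
  with c(1) show ?thesis
    unfolding c_def[symmetric] by (simp add: BVN_low_eq_nn_integral)
qed

lemma kfun_eq_nn_integral:
  assumes "x > 0"
  shows "ennreal (kfun l x y \<rho>) = (\<integral>\<^sup>+s. ennreal (std_normal_density s * exp (- l * sqrt x * s - l\<^sup>2 / 2))
           * indicator {- (l / (2 * sqrt x))<..} s
           * std_normal_cdf ((sqrt (x / y) * s - \<rho> * s) / sqrt (1 - \<rho>\<^sup>2)) \<partial>lborel)"
    (is "_ = ?rhs")
proof -
  define b where "b = - (sqrt (x / y) - \<rho>) / sqrt (1 - \<rho>\<^sup>2)"
  define a where "a = b * l * sqrt x"
  define U where "U = l / (2 * sqrt x) - l * sqrt x"
  define K where "K = exp (l\<^sup>2 * (x - 1) / 2)"
  define f where "f t = ennreal (std_normal_density t) * indicator {..U} t * std_normal_cdf (a + b * t)" for t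
  define h where "h s = ennreal (std_normal_density s * exp (- l * sqrt x * s - l\<^sup>2 / 2))
           * indicator {- (l / (2 * sqrt x))<..} s
           * std_normal_cdf ((sqrt (x / y) * s - \<rho> * s) / sqrt (1 - \<rho>\<^sup>2))" for s
  have [measurable]: "f \<in> borel_measurable borel" and h: "h \<in> borel_measurable borel"
    unfolding f_def h_def by measurable
  have reflect: "h (- (l * sqrt x) + -1 * t) = ennreal K * (ennreal (std_normal_density t) * indicator {..<U} t * std_normal_cdf (a + b * t))" for t
  proof -
    have "(sqrt (x / y) * (- (l * sqrt x) + -1 * t) - \<rho> * (- (l * sqrt x) + -1 * t)) / sqrt (1 - \<rho>\<^sup>2) = a + b * t"
      unfolding a_def b_def by (simp add: add_divide_distrib[symmetric] algebra_simps)
    moreover have "- (l / (2 * sqrt x)) < - (l * sqrt x) + -1 * t \<longleftrightarrow> t < U"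
      unfolding U_def by auto
    moreover have "std_normal_density (- (l * sqrt x) + -1 * t) * exp (- l * sqrt x * (- (l * sqrt x) + -1 * t) - l\<^sup>2 / 2)
        = K * std_normal_density t"
      using std_normal_density_mult_exp_shift[OF less_imp_le[OF assms], where l=l and s="- (l * sqrt x) + -1 * t"]
      by (simp add: K_def normal_density_def)
    moreover have "K \<ge> 0"
      by (simp add: K_def)
    ultimately show ?thesis
      unfolding h_def by (simp add: indicator_def ennreal_mult mult.assoc)
  qed
  have "?rhs = (\<integral>\<^sup>+s. h s \<partial>lborel)"
    by (simp add: h_def)
  also have "\<dots> = (\<integral>\<^sup>+t. h (- (l * sqrt x) + -1 * t) \<partial>lborel)"
    using nn_integral_real_affine[OF h, of "-1" "- (l * sqrt x)"] by simp
  also have "\<dots> = (\<integral>\<^sup>+t. ennreal K * (ennreal (std_normal_density t) * indicator {..<U} t * std_normal_cdf (a + b * t)) \<partial>lborel)"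
    by (simp only: reflect)
  also have "\<dots> = (\<integral>\<^sup>+t. ennreal K * f t \<partial>lborel)"
    unfolding f_def
    by (intro nn_integral_cong_AE eventually_mono[OF AE_lborel_singleton[of U]]) (auto simp: indicator_def)
  also have "\<dots> = ennreal K * ennreal (BVN_low (a / sqrt (1 + b\<^sup>2)) U (- b / sqrt (1 + b\<^sup>2)))"
    by (simp add: nn_integral_cmult f_def nn_integral_std_normal_cdf_affine)
  also have "\<dots> = ennreal (kfun l x y \<rho>)"
    by (simp add: kfun_def Let_def K_def a_def b_def U_def ennreal_mult BVN_low_def)
  finally show ?thesis ..
qed

lemma exp_shift_less_1_iff:
  assumes "l > 0" and "x > 0"
  shows "exp (- l * sqrt x * s - l\<^sup>2 / 2) < 1 \<longleftrightarrow> - (l / (2 * sqrt x)) < s"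
proof -
  have "exp (- l * sqrt x * s - l\<^sup>2 / 2) < 1 \<longleftrightarrow> (l * sqrt x) * (- (l / (2 * sqrt x))) < (l * sqrt x) * s"
    using assms by (simp add: field_simps power2_eq_square) linarith
  also have "\<dots> \<longleftrightarrow> - (l / (2 * sqrt x)) < s"
    using assms by (intro mult_less_cancel_left_pos) simp
  finally show ?thesis .
qed

lemma exp_shift_le_exp_shift_iff:
  assumes "l > 0"
  shows "exp (- l * sqrt x * s - l\<^sup>2 / 2) \<le> exp (- l * sqrt y * t - l\<^sup>2 / 2) \<longleftrightarrow> sqrt y * t \<le> sqrt x * s"
  using assms by (simp add: mult.assoc)

lemma nn_integral_BVN_eq_BVN_up:
  assumes "l > 0" and "x > 0" and "y > 0" and "\<bar>\<rho>\<bar> < 1"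
  shows "(\<integral>\<^sup>+z. of_bool (1 \<le> exp (- l * sqrt x * fst z - l\<^sup>2 / 2) \<and> 1 \<le> exp (- l * sqrt y * snd z - l\<^sup>2 / 2)) \<partial>BVN \<rho>)
    = ennreal (BVN_up (l / (2 * sqrt x)) (l / (2 * sqrt y)) \<rho>)"
  unfolding BVN_up_eq_BVN_low ennreal_BVN_low[OF assms(4)] not_less[symmetric]
    exp_shift_less_1_iff[OF assms(1,2)] exp_shift_less_1_iff[OF assms(1,3)]
  by (simp add: not_less)

lemma nn_integral_BVN_eq_kfun:
  assumes "l > 0" and "x > 0" and "y > 0" and "\<bar>\<rho>\<bar> < 1"
  shows "(\<integral>\<^sup>+z. ennreal (exp (- l * sqrt x * fst z - l\<^sup>2 / 2))
           * of_bool (exp (- l * sqrt x * fst z - l\<^sup>2 / 2) < 1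
                      \<and> exp (- l * sqrt x * fst z - l\<^sup>2 / 2) \<le> exp (- l * sqrt y * snd z - l\<^sup>2 / 2)) \<partial>BVN \<rho>)
    = ennreal (kfun l x y \<rho>)"
proof -
  have \<sigma>: "0 < sqrt (1 - \<rho>\<^sup>2)"
    using assms by (simp add: abs_square_less_1)
  have slope: "sqrt y * t \<le> sqrt x * s \<longleftrightarrow> t \<le> sqrt (x / y) * s" for s t
    using assms by (simp add: real_sqrt_divide field_simps)
  have region: "of_bool (exp (- l * sqrt x * s - l\<^sup>2 / 2) < 1
                      \<and> exp (- l * sqrt x * s - l\<^sup>2 / 2) \<le> exp (- l * sqrt y * t - l\<^sup>2 / 2))
      = indicator {- (l / (2 * sqrt x))<..} s * (indicator {..sqrt (x / y) * s} t :: ennreal)" for s t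
    unfolding exp_shift_less_1_iff[OF assms(1,2)] exp_shift_le_exp_shift_iff[OF assms(1)] slope
    by (simp add: indicator_def)
  have "(\<integral>\<^sup>+z. ennreal (exp (- l * sqrt x * fst z - l\<^sup>2 / 2))
           * of_bool (exp (- l * sqrt x * fst z - l\<^sup>2 / 2) < 1
                      \<and> exp (- l * sqrt x * fst z - l\<^sup>2 / 2) \<le> exp (- l * sqrt y * snd z - l\<^sup>2 / 2)) \<partial>BVN \<rho>)
      = (\<integral>\<^sup>+z. ennreal (exp (- l * sqrt x * fst z - l\<^sup>2 / 2))
           * (indicator {- (l / (2 * sqrt x))<..} (fst z) * indicator {..sqrt (x / y) * fst z} (snd z)) \<partial>BVN \<rho>)"
    by (simp only: region)
  also have "\<dots> = (\<integral>\<^sup>+s. ennreal (std_normal_density s)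
           * (ennreal (exp (- l * sqrt x * s - l\<^sup>2 / 2)) * indicator {- (l / (2 * sqrt x))<..} s
           * (\<integral>\<^sup>+t. ennreal (normal_density (\<rho> * s) (sqrt (1 - \<rho>\<^sup>2)) t) * indicator {..sqrt (x / y) * s} t \<partial>lborel)) \<partial>lborel)"
    using assms(4)
    by (subst nn_integral_BVN_conditional) (auto intro!: nn_integral_cong simp: nn_integral_cmult[symmetric] mult_ac)
  also have "\<dots> = ennreal (kfun l x y \<rho>)"
    using assms \<sigma>
    by (simp add: nn_integral_normal_density_atMost) (simp add: kfun_eq_nn_integral ennreal_mult mult_ac)
  finally show ?thesis .
qed

lemma ennreal_min_1_min_split:
  fixes a b :: real
  assumes "a \<noteq> b"
  shows "ennreal (min 1 (min a b)) = of_bool (1 \<le> a \<and> 1 \<le> b)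
    + ennreal a * of_bool (a < 1 \<and> a \<le> b) + ennreal b * of_bool (b < 1 \<and> b \<le> a)"
  using assms by (auto simp: min_def)

lemma nn_integral_BVN_min_split:
  fixes f g :: "real \<Rightarrow> real"
  assumes [measurable]: "f \<in> borel_measurable borel" "g \<in> borel_measurable borel"
    and ties: "AE z in BVN r. f (fst z) \<noteq> g (snd z)"
  shows "(\<integral>\<^sup>+z. ennreal (min 1 (min (f (fst z)) (g (snd z)))) \<partial>BVN r)
    = (\<integral>\<^sup>+z. of_bool (1 \<le> f (fst z) \<and> 1 \<le> g (snd z)) \<partial>BVN r)
      + (\<integral>\<^sup>+z. ennreal (f (fst z)) * of_bool (f (fst z) < 1 \<and> f (fst z) \<le> g (snd z)) \<partial>BVN r)
      + (\<integral>\<^sup>+z. ennreal (g (fst z)) * of_bool (g (fst z) < 1 \<and> g (fst z) \<le> f (snd z)) \<partial>BVN r)"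
proof -
  have "(\<integral>\<^sup>+z. ennreal (min 1 (min (f (fst z)) (g (snd z)))) \<partial>BVN r)
      = (\<integral>\<^sup>+z. of_bool (1 \<le> f (fst z) \<and> 1 \<le> g (snd z))
           + ennreal (f (fst z)) * of_bool (f (fst z) < 1 \<and> f (fst z) \<le> g (snd z))
           + ennreal (g (snd z)) * of_bool (g (snd z) < 1 \<and> g (snd z) \<le> f (fst z)) \<partial>BVN r)"
    using ties by (intro nn_integral_cong_AE) (auto elim!: eventually_mono simp: ennreal_min_1_min_split)
  also have "\<dots> = (\<integral>\<^sup>+z. of_bool (1 \<le> f (fst z) \<and> 1 \<le> g (snd z)) \<partial>BVN r)
      + (\<integral>\<^sup>+z. ennreal (f (fst z)) * of_bool (f (fst z) < 1 \<and> f (fst z) \<le> g (snd z)) \<partial>BVN r)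
      + (\<integral>\<^sup>+z. ennreal (g (snd z)) * of_bool (g (snd z) < 1 \<and> g (snd z) \<le> f (fst z)) \<partial>BVN r)"
    by (simp add: nn_integral_add)
  also have "(\<integral>\<^sup>+z. ennreal (g (snd z)) * of_bool (g (snd z) < 1 \<and> g (snd z) \<le> f (fst z)) \<partial>BVN r)
      = (\<integral>\<^sup>+z. ennreal (g (fst z)) * of_bool (g (fst z) < 1 \<and> g (fst z) \<le> f (snd z)) \<partial>BVN r)"
  proof -
    have "(\<lambda>z. ennreal (g (fst z)) * of_bool (g (fst z) < 1 \<and> g (fst z) \<le> f (snd z)))
        \<in> borel_measurable (lborel \<Otimes>\<^sub>M lborel)"
      by measurable
    from nn_integral_BVN_swap[OF this] show ?thesis
      by simp
  qed
  finally show ?thesis .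
qed

theorem lemma9:
  fixes l x y \<rho> :: real
  assumes "l > 0" and "x > 0" and "y > 0" and "-1 < \<rho>" and "\<rho> < 1"
  shows "(\<integral>z. min 1 (min (exp (- l * sqrt x * fst z - l\<^sup>2 / 2))
                            (exp (- l * sqrt y * snd z - l\<^sup>2 / 2))) \<partial>BVN \<rho>)
         = BVN_up (l / (2 * sqrt x)) (l / (2 * sqrt y)) \<rho> + kfun l x y \<rho> + kfun l y x \<rho>"
proof -
  let ?A = "\<lambda>s. exp (- l * sqrt x * s - l\<^sup>2 / 2)" and ?B = "\<lambda>t. exp (- l * sqrt y * t - l\<^sup>2 / 2)"
  have r: "\<bar>\<rho>\<bar> < 1"
    using assms by auto
  have "AE z in BVN \<rho>. snd z \<noteq> sqrt x * fst z / sqrt y"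
    using r by (rule AE_BVN_not_graph) measurable
  then have ties: "AE z in BVN \<rho>. ?A (fst z) \<noteq> ?B (snd z)"
    by (rule eventually_mono) (use assms(1-3) in \<open>auto simp: field_simps\<close>)
  have measurable: "(\<lambda>s. exp (- l * sqrt w * s - l\<^sup>2 / 2)) \<in> borel_measurable borel" for w
    by measurable
  have nonneg: "0 \<le> BVN_up (l / (2 * sqrt x)) (l / (2 * sqrt y)) \<rho>" "0 \<le> kfun l x y \<rho>" "0 \<le> kfun l y x \<rho>"
    by (simp_all add: BVN_up_def kfun_def Let_def BVN_low_def)
  have "(\<integral>z. min 1 (min (?A (fst z)) (?B (snd z))) \<partial>BVN \<rho>)
      = enn2real (\<integral>\<^sup>+z. ennreal (min 1 (min (?A (fst z)) (?B (snd z)))) \<partial>BVN \<rho>)"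
    by (rule integral_eq_nn_integral) auto
  also have "(\<integral>\<^sup>+z. ennreal (min 1 (min (?A (fst z)) (?B (snd z)))) \<partial>BVN \<rho>)
      = ennreal (BVN_up (l / (2 * sqrt x)) (l / (2 * sqrt y)) \<rho>) + ennreal (kfun l x y \<rho>) + ennreal (kfun l y x \<rho>)"
    using nn_integral_BVN_min_split[OF measurable measurable ties]
    by (simp only: nn_integral_BVN_eq_BVN_up[OF assms(1-3) r] nn_integral_BVN_eq_kfun[OF assms(1-3) r]
        nn_integral_BVN_eq_kfun[OF assms(1,3,2) r])
  also have "enn2real \<dots> = BVN_up (l / (2 * sqrt x)) (l / (2 * sqrt y)) \<rho> + kfun l x y \<rho> + kfun l y x \<rho>"
    using nonneg by (simp del: ennreal_plus add: ennreal_plus[symmetric])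
  finally show ?thesis .
qed

end
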